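(* Let $a,b,d$ be positive integers with $d$ not a perfect square, $\alpha=a+b^2\sqrt d$, $N_\alpha=a^2-b^4d$, and $t,u$ positive integers with $\varepsilon=(t+u\sqrt d)/2$ a unit of the ring of integers of $\mathbb{Q}(\sqrt d)$; let $N_\varepsilon=(t^2-du^2)/4$. Define $x_k,y_k\in\mathbb{Q}$ ($k\in\mathbb{Z}$) by $x_k+y_k\sqrt d=\alpha\varepsilon^{2k}$. Suppose $N_\alpha<0$, and let $K$ be the largest negative integer with $y_K>b^2$. (a) With $\overline\alpha=a-b^2\sqrt d$: $y_k>\alpha\varepsilon^{2k}/(2\sqrt d)$ for $k\ge0$, and $y_k>-\overline\alpha\,\varepsilon^{2|k|}/(2\sqrt d)$ for $k<0$. (b) For all $k$, $2y_k$ is a positive integer. The sequences $(y_k)_{k\ge0}$ and $(y_{K+1},y_K,y_{K-1},y_{K-2},\dots)$ are increasing sequences of positive numbers. (c) $y_k\ge \dfrac{|N_\alpha|u^2}{4b^2}\left(\dfrac{2du^2}{5}\right)^{k-1}$ for $k>0$, and $y_k\ge \dfrac{|N_\alpha|u^2}{4b^2}\left(\dfrac{2du^2}{5}\right)^{\max(0,K-k)}$ for $k<0$. Moreover, if $(d,t,u)\ne(5,1,1)$ then $2du^2/5$ may be replaced by $5du^2/8$ in these bounds, and if $N_\varepsilon=1$ it may be replaced by $du^2$. *)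

theory Defs
  imports "HOL-Analysis.Analysis" "HOL-Computational_Algebra.Polynomial"
begin

definition alg_int_unit :: "real \<Rightarrow> bool" where
  "alg_int_unit e \<longleftrightarrow> algebraic_int e \<and> algebraic_int (inverse e)"

end

theory Submission
  imports Defs
begin

(* Put eta = epsilon^2. Since epsilon and its inverse are algebraic integers, Gauss's lemma
   forces t^2 - d u^2 = +-4; hence every power eta^k is (T + U sqrt d)/2 with T^2 - d U^2 = 4,
   its inverse is (T - U sqrt d)/2, and comparing the coefficients of sqrt d gives
     y_k = (alpha eta^k + beta eta^-k) / (2 sqrt d),   beta = b^2 sqrt d - a > 0,
   with 2 y_k = a U + b^2 T an integer. Such a two-sided geometric sum is convex in k: it
   decreases while alpha eta^(2k) < beta eta and increases afterwards. On the decreasing side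
   each step back multiplies y by at least eta - 1 + 1/eta = d u^2 + 2 N_eps - 1, which dominates
   every admissible ratio c. The bound |N_alpha| u^2 / (4 b^2) at the starting indices follows
   from eta >= d u^2 / 2, and at k = -1 from the identity
     4 b^2 (y_-1 - |N_alpha| u^2 / (4 b^2)) = (b^2 t - a u)^2. *)

section \<open>Units of real quadratic fields\<close>

lemma sqrt_of_int_irrational:
  fixes d :: int
  assumes "0 \<le> d" and "\<not> (\<exists>m. d = m ^ 2)"
  shows "sqrt (of_int d) \<notin> \<rat>"
proof
  assume "sqrt (of_int d) \<in> \<rat>"
  then have "sqrt (of_int d) \<in> \<int>"
    by (intro rational_algebraic_int_is_int) auto
  then obtain m where "sqrt (of_int d) = of_int m"
    by (auto elim: Ints_cases)
  then have "of_int d = (of_int m :: real) ^ 2"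
    using assms(1) by (metis of_int_0_le_iff real_sqrt_pow2)
  then have "d = m ^ 2"
    by (metis of_int_eq_iff of_int_power)
  with assms(2) show False
    by blast
qed

lemma rational_coords_unique:
  fixes p q p' q' s :: "'a :: field_char_0"
  assumes "p \<in> \<rat>" "q \<in> \<rat>" "p' \<in> \<rat>" "q' \<in> \<rat>" and "s \<notin> \<rat>"
    and "p + q * s = p' + q' * s"
  shows "q = q'"
proof (rule ccontr)
  assume "q \<noteq> q'"
  with assms(6) have "s = (p' - p) / (q - q')"
    by (simp add: field_simps)
  with assms(1-5) show False
    by simp
qed

lemma map_poly_of_int_add:
  "map_poly (of_int :: int \<Rightarrow> 'a :: comm_ring_1) (p + q) = map_poly of_int p + map_poly of_int q"
  by (rule poly_eqI) (simp add: coeff_map_poly)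

lemma map_poly_of_int_mult:
  "map_poly (of_int :: int \<Rightarrow> 'a :: comm_ring_1) (p * q) = map_poly of_int p * map_poly of_int q"
  by (rule poly_eqI) (simp add: coeff_map_poly coeff_mult)

lemma map_poly_of_int_smult:
  "map_poly (of_int :: int \<Rightarrow> 'a :: comm_ring_1) (smult c p) = smult (of_int c) (map_poly of_int p)"
  by (rule poly_eqI) (simp add: coeff_map_poly)

lemma ipoly_linear_root_rational:
  fixes r :: "int poly" and z :: "'a :: field_char_0"
  assumes "degree r \<le> 1" and "r \<noteq> 0" and "poly (map_poly of_int r) z = 0"
  shows "z \<in> \<rat>"
proof -
  have "degree r = 0 \<or> degree r = 1"
    using assms(1) by auto
  then have "poly (map_poly of_int r) z = of_int (coeff r 0) + of_int (coeff r 1) * z"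
    by (auto simp: poly_altdef coeff_map_poly degree_map_poly coeff_eq_0)
  with assms(3) have root: "of_int (coeff r 0) + of_int (coeff r 1) * z = 0"
    by simp
  have "coeff r 1 \<noteq> 0"
  proof
    assume "coeff r 1 = 0"
    with root have "coeff r 0 = 0"
      by simp
    with \<open>coeff r 1 = 0\<close> assms(1,2) show False
      by (metis One_nat_def le_Suc_eq le_zero_eq leading_coeff_0_iff)
  qed
  with root have "z = - of_int (coeff r 0) / of_int (coeff r 1)"
    by (simp add: field_simps add_eq_0_iff2)
  then show ?thesis
    by simp
qed

text \<open>A special case of Gauss's lemma: p divides a monic annihilating polynomial of z,
  since otherwise the pseudo-remainder would exhibit z as rational.\<close>
lemma algebraic_int_root_of_quadratic:
  fixes p :: "int poly" and z :: "'a :: field_char_0"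
  assumes "algebraic_int z" and "z \<notin> \<rat>"
    and "degree p = 2" and "poly (map_poly of_int p) z = 0"
  shows "\<bar>lead_coeff p\<bar> = content p"
proof -
  obtain P where P: "poly (map_poly of_int P) z = 0" "lead_coeff P = 1"
    using assms(1) by (auto simp: algebraic_int_altdef_ipoly)
  have "p \<noteq> 0"
    using assms(3) by auto
  define r where "r = pseudo_mod P p"
  obtain c q where cq: "c \<noteq> 0" "smult c P = p * q + r"
    using pseudo_mod(1)[OF \<open>p \<noteq> 0\<close>] unfolding r_def by blast
  have "poly (map_poly of_int r) z = 0"
    using arg_cong[OF cq(2), of "\<lambda>f. poly (map_poly of_int f) z"] P(1) assms(4)
    by (simp add: map_poly_of_int_add map_poly_of_int_mult map_poly_of_int_smult)
  moreover have "r = 0 \<or> degree r \<le> 1"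
    using pseudo_mod(2)[OF \<open>p \<noteq> 0\<close>, of P] assms(3) unfolding r_def by auto
  ultimately have "r = 0"
    using ipoly_linear_root_rational assms(2) by blast
  have "content P = 1"
    using content_dvd_coeff[of P "degree P"] P(2) is_unit_content_iff[of P] by simp
  then have "smult (unit_factor c) P = primitive_part p * primitive_part q"
    using arg_cong[OF cq(2), of primitive_part] \<open>r = 0\<close>
    by (simp add: primitive_part_smult primitive_part_mult primitive_part_prim)
  then have "unit_factor c = lead_coeff (primitive_part p) * lead_coeff (primitive_part q)"
    using P(2) cq(1) by (metis lead_coeff_mult lead_coeff_smult mult.right_neutral)
  then have "is_unit (lead_coeff (primitive_part p))"
    using cq(1) by (metis dvd_triv_left dvd_unit_imp_unit unit_factor_is_unit)
  moreover have "lead_coeff p = content p * lead_coeff (primitive_part p)"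
    by (metis content_times_primitive_part lead_coeff_smult)
  moreover have "content p \<ge> 0"
    using normalize_content[of p] by simp
  ultimately show ?thesis
    by (simp add: abs_mult)
qed

lemma alg_int_unit_quadratic_norm:
  fixes d t u :: int
  assumes "0 \<le> d" and "\<not> (\<exists>m. d = m ^ 2)" and "u \<noteq> 0"
    and "alg_int_unit ((of_int t + of_int u * sqrt (of_int d)) / 2)"
  shows "t^2 - d * u^2 = 4 \<or> t^2 - d * u^2 = -4"
proof -
  define e where "e = (of_int t + of_int u * sqrt (of_int d)) / (2 :: real)"
  have "e \<notin> \<rat>"
  proof
    assume "e \<in> \<rat>"
    then have "(2 * e - of_int t) / of_int u \<in> \<rat>"
      by simp
    also have "(2 * e - of_int t) / of_int u = sqrt (of_int d)"
      using assms(3) by (simp add: e_def field_simps)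
    finally show False
      using sqrt_of_int_irrational[OF assms(1,2)] by simp
  qed
  have unit: "algebraic_int e" "algebraic_int (inverse e)"
    using assms(4) by (simp_all add: alg_int_unit_def e_def)
  define M where "M = t^2 - d * u^2"
  have "4 * e^2 - 4 * of_int t * e + of_int M = 0"
    using assms(1) by (simp add: e_def M_def power2_eq_square field_simps)
  then have "poly (map_poly of_int [:M, -4 * t, 4:]) e = 0"
    by (simp add: map_poly_pCons power2_eq_square algebra_simps)
  then have "content [:M, -4 * t, 4:] = 4"
    using algebraic_int_root_of_quadratic[OF unit(1) \<open>e \<notin> \<rat>\<close>, of "[:M, -4 * t, 4:]"]
    by simp
  then have "4 dvd M"
    by (metis content_dvd_coeff coeff_pCons_0)
  then obtain n where n: "M = 4 * n"
    by blast
  then have root: "e^2 - of_int t * e + of_int n = 0"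
    using \<open>4 * e^2 - 4 * of_int t * e + of_int M = 0\<close> by simp
  have "n \<noteq> 0"
  proof
    assume "n = 0"
    with root have "e = 0 \<or> e = of_int t"
      by (simp add: power2_eq_square algebra_simps)
    with \<open>e \<notin> \<rat>\<close> show False
      by auto
  qed
  have "e \<noteq> 0"
    using \<open>e \<notin> \<rat>\<close> by auto
  with root have "1 - of_int t * inverse e + of_int n * (inverse e)^2 = 0"
    by (simp add: field_simps power2_eq_square)
  then have "poly (map_poly of_int [:1, -t, n:]) (inverse e) = 0"
    by (simp add: map_poly_pCons power2_eq_square algebra_simps)
  moreover have "content [:1, -t, n:] = 1"
    using content_dvd_coeff[of "[:1, -t, n:]" 0] normalize_content[of "[:1, -t, n:]"]
    by (simp add: abs_if split: if_splits)
  moreover have "inverse e \<notin> \<rat>"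
    using \<open>e \<notin> \<rat>\<close> by simp
  ultimately have "\<bar>n\<bar> = 1"
    using algebraic_int_root_of_quadratic[OF unit(2), of "[:1, -t, n:]"] \<open>n \<noteq> 0\<close> by simp
  then show ?thesis
    using n by (auto simp: M_def abs_if split: if_splits)
qed

section \<open>Half-integral solutions of the norm-one equation\<close>

definition norm_one_halves :: "int \<Rightarrow> 'a \<Rightarrow> 'a :: field_char_0 set" where
  "norm_one_halves d s = {(of_int T + of_int U * s) / 2 | T U. T^2 - d * U^2 = 4}"

lemma brahmagupta_identity:
  fixes d T U V W :: "'a :: comm_ring_1"
  shows "(T * V + d * U * W)^2 - d * (T * W + U * V)^2 = (T^2 - d * U^2) * (V^2 - d * W^2)"
  by (simp add: power2_eq_square algebra_simps)

lemma norm_four_product_even: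
  fixes d T U V W :: int
  assumes "T^2 - d * U^2 = 4" and "V^2 - d * W^2 = 4"
  shows "even (T * V + d * U * W)" and "even (T * W + U * V)"
proof -
  have "even (T^2 - d * U^2)" "even (V^2 - d * W^2)"
    using assms by simp_all
  then have "even T = even (d * U)" "even V = even (d * W)"
    by auto
  then show "even (T * V + d * U * W)" "even (T * W + U * V)"
    by auto
qed

context
  fixes d :: int and s :: "'a :: field_char_0"
  assumes s_square: "s^2 = of_int d"
begin

lemma inverse_norm_one_half:
  assumes "T^2 - d * U^2 = 4"
  shows "inverse ((of_int T + of_int U * s) / 2) = (of_int T - of_int U * s) / 2"
proof (rule inverse_unique)
  have "(of_int T + of_int U * s) / 2 * ((of_int T - of_int U * s) / 2)
        = (of_int (T^2 - d * U^2) :: 'a) / 4"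
    by (simp add: s_square[symmetric] power2_eq_square algebra_simps)
  then show "(of_int T + of_int U * s) / 2 * ((of_int T - of_int U * s) / 2) = 1"
    using assms by simp
qed

lemma times_half_coords:
  "(of_int p + of_int q * s) * ((of_int T + of_int U * s) / 2)
    = (of_int (p * T + d * q * U) + of_int (p * U + q * T) * s) / 2"
  by (simp add: s_square[symmetric] power2_eq_square algebra_simps)

lemma norm_one_halves_one: "1 \<in> norm_one_halves d s"
  unfolding norm_one_halves_def by (rule CollectI, rule exI[of _ 2], rule exI[of _ 0]) simp

lemma norm_one_halves_inverse:
  assumes "z \<in> norm_one_halves d s"
  shows "inverse z \<in> norm_one_halves d s"
proof -
  obtain T U where z: "z = (of_int T + of_int U * s) / 2" and TU: "T^2 - d * U^2 = 4"
    using assms unfolding norm_one_halves_def by blast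
  have "inverse z = (of_int T + of_int (- U) * s) / 2"
    using inverse_norm_one_half[OF TU] by (simp add: z)
  moreover have "T^2 - d * (- U)^2 = 4"
    using TU by simp
  ultimately show ?thesis
    unfolding norm_one_halves_def by blast
qed

lemma norm_one_halves_mult:
  assumes "z \<in> norm_one_halves d s" and "w \<in> norm_one_halves d s"
  shows "z * w \<in> norm_one_halves d s"
proof -
  obtain T U where z: "z = (of_int T + of_int U * s) / 2" and TU: "T^2 - d * U^2 = 4"
    using assms(1) unfolding norm_one_halves_def by blast
  obtain V W where w: "w = (of_int V + of_int W * s) / 2" and VW: "V^2 - d * W^2 = 4"
    using assms(2) unfolding norm_one_halves_def by blast
  obtain P where P: "T * V + d * U * W = 2 * P"
    using norm_four_product_even(1)[OF TU VW] by blast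
  obtain Q where Q: "T * W + U * V = 2 * Q"
    using norm_four_product_even(2)[OF TU VW] by blast
  have "z * w = (of_int (T * V + d * U * W) + of_int (T * W + U * V) * s) / 4"
    by (simp add: z w s_square[symmetric] power2_eq_square field_simps)
  also have "\<dots> = (of_int P + of_int Q * s) / 2"
    unfolding P Q by (simp add: field_simps)
  finally have "z * w = (of_int P + of_int Q * s) / 2" .
  moreover have "P^2 - d * Q^2 = 4"
    using brahmagupta_identity[of T V d U W, unfolded P Q TU VW]
    by (simp add: algebra_simps)
  ultimately show ?thesis
    unfolding norm_one_halves_def by auto
qed

lemma norm_one_halves_power_int:
  assumes "z \<in> norm_one_halves d s"
  shows "z powi k \<in> norm_one_halves d s"
proof -
  have "z ^ n \<in> norm_one_halves d s" for n
    by (induction n) (simp_all add: norm_one_halves_one norm_one_halves_mult assms)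
  moreover have "inverse z ^ n \<in> norm_one_halves d s" for n
    by (induction n) (simp_all add: norm_one_halves_one norm_one_halves_mult
        norm_one_halves_inverse assms)
  ultimately show ?thesis
    by (simp add: power_int_def)
qed

end

section \<open>Two-sided geometric sequences\<close>

lemma weighted_sum_scaled_le_shift:
  fixes A B F \<eta> c :: real
  assumes "0 < A" "0 < B" "0 < F" "1 < \<eta>" and small: "A * F^2 * \<eta> < B"
    and c: "0 \<le> c" "c \<le> \<eta> - 1 + inverse \<eta>"
  shows "c * (A * F + B / F) \<le> A * (F / \<eta>) + B / (F / \<eta>)"
proof -
  have key: "A * F^2 * (c - inverse \<eta>) \<le> B * (\<eta> - c)"
  proof (cases "c \<le> inverse \<eta>")
    case True
    have "inverse \<eta> < 1"
      using assms(4) inverse_less_1_iff by blast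
    then have "0 \<le> B * (\<eta> - c)"
      using True assms(2,4) by simp
    moreover have "A * F^2 * (c - inverse \<eta>) \<le> 0"
      using True assms(1) by (intro mult_nonneg_nonpos) auto
    ultimately show ?thesis
      by linarith
  next
    case False
    have "c * (1 + \<eta>) \<le> (\<eta> - 1 + inverse \<eta>) * (1 + \<eta>)"
      using c assms(4) by (intro mult_right_mono) auto
    also have "\<dots> = \<eta> * \<eta> + inverse \<eta>"
      using assms(4) by (simp add: field_simps)
    finally have "c - inverse \<eta> \<le> \<eta> * (\<eta> - c)"
      by (simp add: algebra_simps)
    have "A * F^2 * (c - inverse \<eta>) \<le> B * inverse \<eta> * (c - inverse \<eta>)"
      using False small assms(4) by (intro mult_right_mono) (auto simp: field_simps)
    also have "\<dots> \<le> B * inverse \<eta> * (\<eta> * (\<eta> - c))"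
      using \<open>c - inverse \<eta> \<le> \<eta> * (\<eta> - c)\<close> assms by (intro mult_left_mono) auto
    also have "\<dots> = B * (\<eta> - c)"
      using assms(4) by simp
    finally show ?thesis .
  qed
  have "A * (F / \<eta>) + B / (F / \<eta>) - c * (A * F + B / F)
        = (B * (\<eta> - c) - A * F^2 * (c - inverse \<eta>)) / F"
    using assms(3,4) by (simp add: field_simps power2_eq_square)
  also have "\<dots> \<ge> 0"
    using key assms(3) by simp
  finally show ?thesis
    by simp
qed

locale weighted_cosh_sequence =
  fixes A B \<eta> s :: real and y :: "int \<Rightarrow> real"
  assumes B_pos: "0 < B" and B_less_A: "B < A" and eta_gt_1: "1 < \<eta>" and s_pos: "0 < s"
    and y_eq: "\<And>k. y k = (A * \<eta> powi k + B * inverse (\<eta> powi k)) / (2 * s)"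
begin

lemma eta_powi_pos: "0 < \<eta> powi k"
  using eta_gt_1 by simp

lemma eta_powi_mono: "j \<le> k \<Longrightarrow> \<eta> powi j \<le> \<eta> powi k"
  using eta_gt_1 by (simp add: power_int_increasing)

lemma A_term_less_y: "A * \<eta> powi k / (2 * s) < y k"
  using B_pos eta_powi_pos[of k] s_pos by (simp add: y_eq divide_strict_right_mono)

lemma B_term_less_y: "B * inverse (\<eta> powi k) / (2 * s) < y k"
  using B_pos B_less_A eta_powi_pos[of k] s_pos by (simp add: y_eq divide_strict_right_mono)

lemma y_pos: "0 < y k"
proof -
  have "0 < B * inverse (\<eta> powi k) / (2 * s)"
    using B_pos eta_powi_pos[of k] s_pos by simp
  with B_term_less_y[of k] show ?thesis
    by linarith
qed

lemma y_pred_minus_y: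
  "y (k - 1) - y k = (\<eta> - 1) * (B * \<eta> - A * (\<eta> powi k)^2) / (2 * s * \<eta> * \<eta> powi k)"
proof -
  have "\<eta> powi (k - 1) = \<eta> powi k / \<eta>"
    using eta_gt_1 by (simp add: power_int_diff)
  then show ?thesis
    using eta_gt_1 eta_powi_pos[of k] s_pos
    by (simp add: y_eq field_simps power2_eq_square)
qed

lemma y_pred_minus_y_sign:
  "0 < y (k - 1) - y k \<longleftrightarrow> A * (\<eta> powi k)^2 < B * \<eta>"
  "y (k - 1) - y k < 0 \<longleftrightarrow> B * \<eta> < A * (\<eta> powi k)^2"
proof -
  define D where "D = 2 * s * \<eta> * \<eta> powi k"
  have "0 < D" and "0 < \<eta> - 1"
    using s_pos eta_gt_1 eta_powi_pos[of k] by (auto simp: D_def)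
  then show "0 < y (k - 1) - y k \<longleftrightarrow> A * (\<eta> powi k)^2 < B * \<eta>"
    and "y (k - 1) - y k < 0 \<longleftrightarrow> B * \<eta> < A * (\<eta> powi k)^2"
    unfolding y_pred_minus_y D_def[symmetric]
    by (simp_all add: zero_less_divide_iff divide_less_0_iff zero_less_mult_iff mult_less_0_iff)
qed

lemma y_less_pred_iff: "y k < y (k - 1) \<longleftrightarrow> A * (\<eta> powi k)^2 < B * \<eta>"
  using y_pred_minus_y_sign(1) by simp

lemma y_less_succ:
  assumes "0 \<le> k"
  shows "y k < y (k + 1)"
proof -
  have "\<eta> \<le> \<eta> powi (k + 1)"
    using eta_powi_mono[of 1 "k + 1"] assms by simp
  also have "\<dots> \<le> \<eta> powi (k + 1) * \<eta> powi (k + 1)"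
    using \<open>\<eta> \<le> \<eta> powi (k + 1)\<close> eta_gt_1 by simp
  finally have "\<eta> \<le> (\<eta> powi (k + 1))^2"
    by (simp add: power2_eq_square)
  then have "A * \<eta> \<le> A * (\<eta> powi (k + 1))^2"
    using B_pos B_less_A by simp
  moreover have "B * \<eta> < A * \<eta>"
    using B_less_A eta_gt_1 by simp
  ultimately show ?thesis
    using y_pred_minus_y_sign(2)[of "k + 1"] by simp
qed

lemma y_less_pred_downward:
  assumes "y j < y (j - 1)" and "k \<le> j"
  shows "y k < y (k - 1)"
proof -
  have "(\<eta> powi k)^2 \<le> (\<eta> powi j)^2"
    using eta_powi_mono[OF assms(2)] eta_powi_pos[of k] by (simp add: power_mono)
  then have "A * (\<eta> powi k)^2 \<le> A * (\<eta> powi j)^2"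
    using B_pos B_less_A by simp
  with assms(1) show ?thesis
    unfolding y_less_pred_iff by simp
qed

lemma scaled_y_le_pred:
  assumes "y j < y (j - 1)" and "k < j"
    and "0 \<le> c" and "c \<le> \<eta> - 1 + inverse \<eta>"
  shows "c * y k \<le> y (k - 1)"
proof -
  have "\<eta> powi k * \<eta> \<le> \<eta> powi j"
    using eta_powi_mono[of "k + 1" j] assms(2) eta_gt_1 by (simp add: power_int_add_1)
  then have "(\<eta> powi k * \<eta>)^2 \<le> (\<eta> powi j)^2"
    using eta_powi_pos[of k] eta_gt_1 by (simp add: power_mono)
  then have "(\<eta> powi k)^2 * \<eta> * \<eta> \<le> (\<eta> powi j)^2"
    by (simp add: power_mult_distrib power2_eq_square mult_ac)
  then have "A * (\<eta> powi k)^2 * \<eta> * \<eta> \<le> A * (\<eta> powi j)^2"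
    using B_pos B_less_A by (simp add: mult.assoc)
  also have "\<dots> < B * \<eta>"
    using assms(1) unfolding y_less_pred_iff .
  finally have "A * (\<eta> powi k)^2 * \<eta> < B"
    using eta_gt_1 by simp
  then have "c * (A * \<eta> powi k + B / \<eta> powi k)
      \<le> A * (\<eta> powi k / \<eta>) + B / (\<eta> powi k / \<eta>)"
    using weighted_sum_scaled_le_shift B_pos B_less_A eta_powi_pos eta_gt_1 assms(3,4)
    by simp
  moreover have "\<eta> powi (k - 1) = \<eta> powi k / \<eta>"
    using eta_gt_1 by (simp add: power_int_diff)
  ultimately show ?thesis
    using s_pos by (simp add: y_eq divide_right_mono inverse_eq_divide mult.assoc)
qed

lemma power_scaled_y_le:
  assumes "y j < y (j - 1)" and "0 \<le> c" and "c \<le> \<eta> - 1 + inverse \<eta>"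
  shows "c ^ n * y (j - 1) \<le> y (j - 1 - int n)"
proof (induction n)
  case (Suc n)
  have "c ^ Suc n * y (j - 1) = c * (c ^ n * y (j - 1))"
    by simp
  also have "\<dots> \<le> c * y (j - 1 - int n)"
    using Suc assms(2) by (rule mult_left_mono)
  also have "\<dots> \<le> y (j - 1 - int (Suc n))"
    using scaled_y_le_pred[OF assms(1) _ assms(2,3), of "j - 1 - int n"] by simp
  finally show ?case .
qed simp

lemma A_eta_power_less_y:
  assumes "0 < k" and "0 \<le> c" and "c \<le> \<eta>"
  shows "A * \<eta> * c ^ nat (k - 1) / (2 * s) < y k"
proof -
  have "nat k = Suc (nat (k - 1))"
    using assms(1) by simp
  then have "\<eta> powi k = \<eta> * \<eta> ^ nat (k - 1)"
    using assms(1) by (simp add: power_int_def)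
  moreover have "c ^ nat (k - 1) \<le> \<eta> ^ nat (k - 1)"
    using power_mono[OF assms(3,2)] .
  ultimately have "A * \<eta> * c ^ nat (k - 1) \<le> A * \<eta> powi k"
    using B_pos B_less_A eta_gt_1 by (simp add: mult.assoc mult_left_mono)
  then have "A * \<eta> * c ^ nat (k - 1) / (2 * s) \<le> A * \<eta> powi k / (2 * s)"
    using s_pos by (simp add: divide_right_mono)
  with A_term_less_y[of k] show ?thesis
    by linarith
qed

lemma B_eta_square_less_y:
  assumes "k \<le> -2"
  shows "B * \<eta>^2 / (2 * s) < y k"
proof -
  have "\<eta>^2 \<le> inverse (\<eta> powi k)"
    using eta_powi_mono[of 2 "- k"] assms by (simp add: power_int_minus)
  then have "B * \<eta>^2 / (2 * s) \<le> B * inverse (\<eta> powi k) / (2 * s)"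
    using B_pos s_pos by (simp add: divide_right_mono)
  with B_term_less_y[of k] show ?thesis
    by linarith
qed

end

section \<open>The orbit of an element of negative norm\<close>

locale negative_norm_orbit =
  fixes a b d t u :: int and x y :: "int \<Rightarrow> real"
  assumes pos: "a > 0" "b > 0" "d > 0" "t > 0" "u > 0"
    and nonsq: "\<not> (\<exists>m::int. d = m ^ 2)"
    and unit: "alg_int_unit ((real_of_int t + real_of_int u * sqrt (real_of_int d)) / 2)"
    and xy: "\<And>k. x k \<in> \<rat> \<and> y k \<in> \<rat> \<and>
              x k + y k * sqrt (real_of_int d) =
              (real_of_int a + real_of_int (b^2) * sqrt (real_of_int d)) *
              ((real_of_int t + real_of_int u * sqrt (real_of_int d)) / 2) powi (2 * k)"
    and Nneg: "a^2 - b^4 * d < 0"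
begin

abbreviation \<epsilon> :: real where "\<epsilon> \<equiv> (of_int t + of_int u * sqrt d) / 2"
abbreviation \<eta> :: real where "\<eta> \<equiv> \<epsilon>^2"
abbreviation \<alpha> :: real where "\<alpha> \<equiv> of_int a + of_int (b^2) * sqrt d"
abbreviation \<beta> :: real where "\<beta> \<equiv> of_int (b^2) * sqrt d - of_int a"

definition norm_eps :: int where "norm_eps = (t^2 - d * u^2) div 4"

lemma sqrt_d_pos: "0 < sqrt d"
  using pos(3) by simp

lemma sqrt_d_square: "(sqrt d)^2 = d"
  using pos(3) by simp

lemma norm_eps_eq: "t^2 - d * u^2 = 4 * norm_eps"
  and norm_eps_cases: "norm_eps = 1 \<or> norm_eps = -1"
  using alg_int_unit_quadratic_norm[OF _ nonsq _ unit] pos by (auto simp: norm_eps_def)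

lemma norm_eps_real: "of_int t ^ 2 = of_int d * of_int u ^ 2 + 4 * (of_int norm_eps :: real)"
  using arg_cong[OF norm_eps_eq, of real_of_int] by simp

lemma du2_ge_5: "5 \<le> d * u^2"
proof -
  have "0 < d * u^2"
    using pos by simp
  have "1 \<le> t^2"
    using pos(4) by simp
  have "t \<le> 2 \<Longrightarrow> t^2 \<le> 2^2"
    using pos(4) by (intro power_mono) auto
  moreover have "3 \<le> t \<Longrightarrow> 3^2 \<le> t^2"
    by (intro power_mono) auto
  ultimately show ?thesis
    using norm_eps_eq norm_eps_cases \<open>0 < d * u^2\<close> \<open>1 \<le> t^2\<close> by (cases "t \<le> 2") auto
qed

lemma du2_ge_8:
  assumes "norm_eps = -1" and "(d, t, u) \<noteq> (5, 1, 1)"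
  shows "8 \<le> d * u^2"
proof (cases "t = 1")
  case True
  with assms(1) norm_eps_eq have "d * u^2 = 5"
    by simp
  have "d \<noteq> 1"
    using nonsq by (metis power_one)
  have "u = 1"
  proof (rule ccontr)
    assume "u \<noteq> 1"
    then have "2^2 \<le> u^2"
      using pos(5) by (intro power_mono) auto
    then have "2 * 2^2 \<le> d * u^2"
      using \<open>d \<noteq> 1\<close> pos(3) by (intro mult_mono) auto
    with \<open>d * u^2 = 5\<close> show False
      by simp
  qed
  with \<open>d * u^2 = 5\<close> True assms(2) show ?thesis
    by simp
next
  case False
  then have "2^2 \<le> t^2"
    using pos(4) by (intro power_mono) auto
  with assms(1) norm_eps_eq show ?thesis
    by simp
qed

lemma eta_norm: "(d * u^2 + 2 * norm_eps)^2 - d * (t * u)^2 = 4"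
proof -
  have "(d * u^2 + 2 * norm_eps)^2 - d * (t * u)^2 = (d * u^2 + 2 * norm_eps)^2 - d * u^2 * t^2"
    by (simp add: power_mult_distrib)
  also have "\<dots> = 4 * norm_eps^2"
    using norm_eps_eq by (simp add: power2_eq_square algebra_simps)
  finally show ?thesis
    using norm_eps_cases by auto
qed

lemma eta_coords: "\<eta> = (of_int (d * u^2 + 2 * norm_eps) + of_int (t * u) * sqrt d) / 2"
proof -
  have "\<eta> = (of_int t ^ 2 + of_int d * of_int u ^ 2 + 2 * of_int t * of_int u * sqrt d) / 4"
    by (simp add: power_divide power2_sum power_mult_distrib sqrt_d_square mult_ac)
  then show ?thesis
    by (simp add: norm_eps_real field_simps)
qed

lemma eta_in_norm_one_halves: "\<eta> \<in> norm_one_halves d (sqrt d)"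
  unfolding norm_one_halves_def using eta_coords eta_norm by blast

lemma inverse_eta: "inverse \<eta> = (of_int (d * u^2 + 2 * norm_eps) - of_int (t * u) * sqrt d) / 2"
  by (subst eta_coords) (rule inverse_norm_one_half[OF sqrt_d_square eta_norm])

lemma eta_gt_1: "1 < \<eta>"
proof -
  have "\<eta> - inverse \<eta> = of_int (t * u) * sqrt d"
    unfolding inverse_eta by (subst eta_coords) (simp add: field_simps)
  also have "\<dots> > 0"
    using pos sqrt_d_pos by simp
  finally have "inverse \<eta> < \<eta>"
    by simp
  have "0 < \<epsilon>"
    using pos sqrt_d_pos by (simp add: add_pos_pos)
  show ?thesis
  proof (rule ccontr)
    assume "\<not> 1 < \<eta>"
    then have "1 \<le> inverse \<eta>"
      using \<open>0 < \<epsilon>\<close> by (simp add: one_le_inverse)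
    with \<open>inverse \<eta> < \<eta>\<close> \<open>\<not> 1 < \<eta>\<close> show False
      by linarith
  qed
qed

lemma eta_shift_sum: "\<eta> - 1 + inverse \<eta> = of_int (d * u^2 + 2 * norm_eps - 1)"
  unfolding inverse_eta by (subst eta_coords) (simp add: field_simps)

lemma du2_eq_square: "of_int (d * u^2) = (of_int u * sqrt d)^2"
  by (simp add: power_mult_distrib sqrt_d_square)

lemma eta_ge_half_du2: "of_int (d * u^2) / 2 \<le> \<eta>"
proof -
  have "(2 :: real)^2 \<le> of_int (d * u^2)"
    using du2_ge_5 by (simp del: of_int_mult of_int_power)
  also have "\<dots> = (of_int u * sqrt d)^2"
    by (rule du2_eq_square)
  finally have "2 \<le> of_int u * sqrt d"
    by (rule power2_le_imp_le) (use pos(5) sqrt_d_pos in simp)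
  also have "\<dots> \<le> of_int t * (of_int u * sqrt d)"
    using pos(4) \<open>2 \<le> of_int u * sqrt d\<close> by (intro mult_le_cancel_right1[THEN iffD2]) simp
  finally have "2 \<le> of_int (t * u) * sqrt d"
    by (simp add: mult.assoc)
  moreover have "-1 \<le> norm_eps"
    using norm_eps_cases by auto
  moreover have "2 * \<eta> = of_int (d * u^2) + 2 * of_int norm_eps + of_int (t * u) * sqrt d"
    by (subst eta_coords) simp
  ultimately show ?thesis
    by linarith
qed

lemma norm_alpha_real: "of_int a ^ 2 < (of_int (b^2) * sqrt d :: real)^2"
proof -
  have "real_of_int (a^2) < of_int (b^4 * d)"
    using Nneg by (simp only: of_int_less_iff)
  then show ?thesis
    by (simp add: power_mult_distrib sqrt_d_square flip: power_mult)
qed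

lemma beta_pos: "0 < \<beta>"
proof -
  have "of_int a < of_int (b^2) * sqrt d"
    using norm_alpha_real by (rule power_less_imp_less_base) (use sqrt_d_pos in simp)
  then show ?thesis
    by simp
qed

lemma beta_less_alpha: "\<beta> < \<alpha>"
  using pos(1) by simp

lemma alpha_times_beta: "\<alpha> * \<beta> = \<bar>real_of_int (a^2 - b^4 * d)\<bar>"
proof -
  have "\<alpha> * \<beta> = (of_int (b^2) * sqrt d)^2 - of_int a ^ 2"
    by (simp add: power2_eq_square algebra_simps)
  also have "\<dots> = \<bar>of_int a ^ 2 - (of_int (b^2) * sqrt d)^2\<bar>"
    using norm_alpha_real by simp
  also have "\<dots> = \<bar>real_of_int (a^2 - b^4 * d)\<bar>"
    by (simp add: power_mult_distrib sqrt_d_square flip: power_mult)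
  finally show ?thesis .
qed

lemma eps_powi_double: "\<epsilon> powi (2 * k) = \<eta> powi k"
  by (simp add: power_int_mult)

lemma eta_powi_coords:
  obtains T U where "\<eta> powi k = (of_int T + of_int U * sqrt d) / 2"
    and "inverse (\<eta> powi k) = (of_int T - of_int U * sqrt d) / 2"
proof -
  have "\<eta> powi k \<in> norm_one_halves d (sqrt d)"
    by (rule norm_one_halves_power_int[OF sqrt_d_square eta_in_norm_one_halves])
  then obtain T U where "\<eta> powi k = (of_int T + of_int U * sqrt d) / 2" and "T^2 - d * U^2 = 4"
    unfolding norm_one_halves_def by blast
  with inverse_norm_one_half[OF sqrt_d_square] that show ?thesis
    by metis
qed

lemma y_via_coords:
  assumes "\<eta> powi k = (of_int T + of_int U * sqrt d) / 2"
  shows "y k = of_int (a * U + b^2 * T) / 2"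
proof -
  have "x k + y k * sqrt d = \<alpha> * \<eta> powi k"
    using xy[of k] by (simp only: eps_powi_double)
  also have "\<dots> = (of_int (a * T + d * b^2 * U) + of_int (a * U + b^2 * T) * sqrt d) / 2"
    unfolding assms by (rule times_half_coords[OF sqrt_d_square])
  also have "\<dots> = of_int (a * T + d * b^2 * U) / 2 + of_int (a * U + b^2 * T) / 2 * sqrt d"
    by (simp add: add_divide_distrib)
  finally have "x k + y k * sqrt d
      = of_int (a * T + d * b^2 * U) / 2 + of_int (a * U + b^2 * T) / 2 * sqrt d" .
  moreover have "x k \<in> \<rat>" "y k \<in> \<rat>"
    using xy by blast+
  moreover have "sqrt d \<notin> \<rat>"
    using sqrt_of_int_irrational[OF _ nonsq] pos(3) by simp
  ultimately show ?thesis
    by (intro rational_coords_unique[of "x k" "y k"]) simp_all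
qed

lemma y_eq: "y k = (\<alpha> * \<eta> powi k + \<beta> * inverse (\<eta> powi k)) / (2 * sqrt d)"
proof -
  obtain T U where TU: "\<eta> powi k = (of_int T + of_int U * sqrt d) / 2"
    "inverse (\<eta> powi k) = (of_int T - of_int U * sqrt d) / 2"
    by (rule eta_powi_coords)
  have "y k = of_int (a * U + b^2 * T) / 2"
    by (rule y_via_coords[OF TU(1)])
  also have "\<dots> = 2 * sqrt d * (of_int (a * U + b^2 * T) / 2) / (2 * sqrt d)"
    using sqrt_d_pos by (intro nonzero_mult_div_cancel_left[symmetric]) simp
  also have "2 * sqrt d * (of_int (a * U + b^2 * T) / 2)
      = \<alpha> * ((of_int T + of_int U * sqrt d) / 2) + \<beta> * ((of_int T - of_int U * sqrt d) / 2)"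
    by (simp add: field_simps)
  finally show ?thesis
    using TU(2) unfolding TU(1) by (simp only:)
qed

lemma twice_y_Ints: "2 * y k \<in> \<int>"
proof -
  obtain T U where "\<eta> powi k = (of_int T + of_int U * sqrt d) / 2"
    by (rule eta_powi_coords)
  then have "2 * y k = of_int (a * U + b^2 * T)"
    by (simp add: y_via_coords)
  then show ?thesis
    by (metis Ints_of_int)
qed

sublocale cosh: weighted_cosh_sequence \<alpha> \<beta> \<eta> "sqrt d" y
  using beta_pos beta_less_alpha eta_gt_1 sqrt_d_pos y_eq by unfold_locales

lemma alpha_term_less_y: "\<alpha> * \<epsilon> powi (2 * k) / (2 * sqrt d) < y k"
  using cosh.A_term_less_y by (simp only: eps_powi_double)

lemma conj_alpha_term_less_y:
  assumes "k < 0"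
  shows "- (of_int a - of_int (b^2) * sqrt d) * \<epsilon> powi (2 * \<bar>k\<bar>) / (2 * sqrt d) < y k"
proof -
  have "\<epsilon> powi (2 * \<bar>k\<bar>) = inverse (\<eta> powi k)"
    using assms by (simp add: eps_powi_double power_int_minus)
  then show ?thesis
    using cosh.B_term_less_y[of k] by simp
qed

lemma y_zero: "y 0 = of_int (b^2)"
  using y_via_coords[of 0 2 0] by simp

lemma y_minus_one: "y (-1) = of_int (b^2 * (d * u^2 + 2 * norm_eps) - a * (t * u)) / 2"
  using y_via_coords[of "-1" "d * u^2 + 2 * norm_eps" "- (t * u)"] inverse_eta
  by (simp add: power_int_minus)

definition admissible_ratio :: "real \<Rightarrow> bool" where
  "admissible_ratio c \<longleftrightarrow> c = real_of_int (2 * d * u^2) / 5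
    \<or> ((d, t, u) \<noteq> (5, 1, 1) \<and> c = real_of_int (5 * d * u^2) / 8)
    \<or> ((real_of_int t ^ 2 - real_of_int d * real_of_int u ^ 2) / 4 = 1 \<and> c = real_of_int (d * u^2))"

lemma admissible_ratio_bounds:
  assumes "admissible_ratio c"
  shows "0 \<le> c" and "c \<le> \<eta> - 1 + inverse \<eta>" and "c \<le> \<eta>"
proof -
  have m5: "5 \<le> real_of_int (d * u^2)"
    using du2_ge_5 by (simp del: of_int_mult of_int_power)
  have "0 \<le> c \<and> c \<le> of_int (d * u^2 + 2 * norm_eps - 1)"
    using assms unfolding admissible_ratio_def
  proof (elim disjE conjE)
    assume "c = of_int (2 * d * u^2) / 5"
    then show ?thesis
      using m5 norm_eps_cases by auto
  next
    assume "(d, t, u) \<noteq> (5, 1, 1)" and "c = of_int (5 * d * u^2) / 8"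
    moreover have "norm_eps = -1 \<Longrightarrow> 8 \<le> real_of_int (d * u^2)"
      using du2_ge_8 \<open>(d, t, u) \<noteq> (5, 1, 1)\<close> by (simp del: of_int_mult of_int_power)
    ultimately show ?thesis
      using m5 norm_eps_cases by auto
  next
    assume "((real_of_int t)^2 - real_of_int d * (real_of_int u)^2) / 4 = 1"
      and "c = of_int (d * u^2)"
    moreover from this(1) have "norm_eps = 1"
      using norm_eps_real by simp
    ultimately show ?thesis
      using m5 by simp
  qed
  moreover have "inverse \<eta> < 1"
    using eta_gt_1 inverse_less_1_iff by blast
  ultimately show "0 \<le> c" "c \<le> \<eta> - 1 + inverse \<eta>" "c \<le> \<eta>"
    using eta_shift_sum by linarith+
qed

abbreviation base_bound :: real where
  "base_bound \<equiv> \<bar>real_of_int (a^2 - b^4 * d)\<bar> * u^2 / (4 * b^2)"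

lemma base_bound_le_alpha_eta: "base_bound \<le> \<alpha> * \<eta> / (2 * sqrt d)"
proof -
  have "base_bound = \<alpha> * \<beta> * of_int (u^2) / of_int (4 * b^2)"
    unfolding alpha_times_beta ..
  also have "\<dots> \<le> \<alpha> * (of_int (b^2) * sqrt d) * of_int (u^2) / of_int (4 * b^2)"
    using beta_pos beta_less_alpha pos by (intro divide_right_mono mult_right_mono mult_left_mono) auto
  also have "\<dots> = \<alpha> * (of_int (d * u^2) / 2) / (2 * sqrt d)"
    unfolding du2_eq_square using pos sqrt_d_pos by (simp add: field_simps power2_eq_square)
  also have "\<dots> \<le> \<alpha> * \<eta> / (2 * sqrt d)"
    using eta_ge_half_du2 beta_pos beta_less_alpha sqrt_d_pos
    by (intro divide_right_mono mult_left_mono) auto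
  finally show ?thesis .
qed

lemma base_bound_le_beta_eta_square: "base_bound \<le> \<beta> * \<eta>^2 / (2 * sqrt d)"
proof -
  have "base_bound = \<alpha> * \<beta> * of_int (u^2) / of_int (4 * b^2)"
    unfolding alpha_times_beta ..
  also have "\<dots> \<le> (2 * of_int (b^2) * sqrt d) * \<beta> * of_int (u^2) / of_int (4 * b^2)"
  proof -
    have "\<alpha> \<le> 2 * of_int (b^2) * sqrt d"
      using beta_pos by (simp add: mult.commute)
    then show ?thesis
      using beta_pos pos by (intro divide_right_mono mult_right_mono) auto
  qed
  also have "\<dots> = \<beta> * of_int (d * u^2) / (2 * sqrt d)"
  proof -
    have "2 * of_int (b^2) * sqrt d * B * of_int (u^2) / of_int (4 * b^2)
        = B * (of_int u * sqrt d)^2 / (2 * sqrt d)" for B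
      using pos sqrt_d_pos by (simp add: field_simps power2_eq_square)
    then show ?thesis
      unfolding du2_eq_square .
  qed
  also have "\<dots> \<le> \<beta> * \<eta>^2 / (2 * sqrt d)"
  proof -
    have "5 \<le> real_of_int (d * u^2)"
      using du2_ge_5 by (simp del: of_int_mult of_int_power)
    then have "of_int (d * u^2) \<le> (of_int (d * u^2) / 2 :: real)^2"
      by (simp add: power2_eq_square field_simps del: of_int_mult of_int_power)
    also have "\<dots> \<le> \<eta>^2"
      using eta_ge_half_du2 \<open>5 \<le> real_of_int (d * u^2)\<close> by (intro power_mono) auto
    finally show ?thesis
      using beta_pos sqrt_d_pos by (intro divide_right_mono mult_left_mono) auto
  qed
  finally show ?thesis .
qed

lemma base_bound_le_y_minus_one: "base_bound \<le> y (-1)"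
proof -
  have square: "2 * b^2 * (b^2 * (d * u^2 + 2 * norm_eps) - a * (t * u)) - (b^4 * d - a^2) * u^2
      = (b^2 * t - a * u)^2"
    using norm_eps_eq by algebra
  have "\<bar>real_of_int (a^2 - b^4 * d)\<bar> = of_int (b^4 * d - a^2)"
    using Nneg by (simp only: flip: of_int_abs)
  then have "base_bound = of_int ((b^4 * d - a^2) * u^2) / of_int (4 * b^2)"
    by (simp only: of_int_mult)
  moreover have "y (-1) = of_int (2 * b^2 * (b^2 * (d * u^2 + 2 * norm_eps) - a * (t * u)))
      / of_int (4 * b^2)"
    using pos by (simp add: y_minus_one)
  ultimately have "y (-1) - base_bound = of_int ((b^2 * t - a * u)^2) / of_int (4 * b^2)"
    by (simp only: square[symmetric] of_int_diff diff_divide_distrib)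
  also have "\<dots> \<ge> 0"
    by simp
  finally show ?thesis
    by simp
qed

lemma base_bound_le_y_neg:
  assumes "k < 0"
  shows "base_bound \<le> y k"
proof (cases "k = -1")
  case True
  then show ?thesis
    using base_bound_le_y_minus_one by simp
next
  case False
  then show ?thesis
    using assms base_bound_le_beta_eta_square cosh.B_eta_square_less_y[of k] by simp
qed

lemma lower_bound_pos:
  assumes "admissible_ratio c" and "0 < k"
  shows "base_bound * c ^ nat (k - 1) \<le> y k"
proof -
  have "base_bound * c ^ nat (k - 1) \<le> \<alpha> * \<eta> / (2 * sqrt d) * c ^ nat (k - 1)"
    using base_bound_le_alpha_eta admissible_ratio_bounds(1)[OF assms(1)]
    by (intro mult_right_mono) auto
  also have "\<dots> < y k"
    using cosh.A_eta_power_less_y[OF assms(2) admissible_ratio_bounds(1,3)[OF assms(1)]]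
    by simp
  finally show ?thesis
    by simp
qed

context
  fixes K :: int
  assumes K_neg: "K < 0" and y_K: "real_of_int (b^2) < y K"
    and K_max: "\<And>k. k < 0 \<Longrightarrow> real_of_int (b^2) < y k \<Longrightarrow> k \<le> K"
begin

lemma y_succ_K_less: "y (K + 1) < y K"
proof -
  have "y (K + 1) \<le> of_int (b^2)"
  proof (cases "K + 1 = 0")
    case True
    then show ?thesis
      using y_zero by simp
  next
    case False
    then show ?thesis
      using K_neg K_max[of "K + 1"] by force
  qed
  with y_K show ?thesis
    by simp
qed

lemma y_less_pred_upto_K:
  assumes "k \<le> K + 1"
  shows "y k < y (k - 1)"
  using cosh.y_less_pred_downward[of "K + 1" k] y_succ_K_less assms by simp

lemma lower_bound_neg:
  assumes "admissible_ratio c" and "k < 0"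
  shows "base_bound * c ^ nat (max 0 (K - k)) \<le> y k"
proof (cases "K \<le> k")
  case True
  then show ?thesis
    using base_bound_le_y_neg[OF assms(2)] by simp
next
  case False
  define n where "n = nat (K - k)"
  have "base_bound * c ^ n \<le> y K * c ^ n"
    using base_bound_le_y_neg[OF K_neg] admissible_ratio_bounds(1)[OF assms(1)]
    by (intro mult_right_mono) auto
  also have "\<dots> \<le> y (K + 1 - 1 - int n)"
    using cosh.power_scaled_y_le[of "K + 1" c n] y_succ_K_less admissible_ratio_bounds[OF assms(1)]
    by (simp add: mult.commute)
  finally show ?thesis
    using False by (simp add: n_def)
qed

end

end

theorem lemma3p5:
  fixes a b d t u :: int and x y :: "int \<Rightarrow> real"
  assumes pos: "a > 0" "b > 0" "d > 0" "t > 0" "u > 0"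
    and nonsq: "\<not> (\<exists>m::int. d = m ^ 2)"
    and unit: "alg_int_unit ((real_of_int t + real_of_int u * sqrt (real_of_int d)) / 2)"
    and xy: "\<And>k. x k \<in> \<rat> \<and> y k \<in> \<rat> \<and>
              x k + y k * sqrt (real_of_int d) =
              (real_of_int a + real_of_int (b^2) * sqrt (real_of_int d)) *
              ((real_of_int t + real_of_int u * sqrt (real_of_int d)) / 2) powi (2 * k)"
    and Nneg: "a^2 - b^4 * d < 0"
  shows
    \<comment> \<open>(a)\<close>
    "(\<forall>k\<ge>0. y k > (real_of_int a + real_of_int (b^2) * sqrt (real_of_int d)) *
                 ((real_of_int t + real_of_int u * sqrt (real_of_int d)) / 2) powi (2 * k)
                 / (2 * sqrt (real_of_int d))) \<and>
     (\<forall>k<0. y k > - (real_of_int a - real_of_int (b^2) * sqrt (real_of_int d)) *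
                 ((real_of_int t + real_of_int u * sqrt (real_of_int d)) / 2) powi (2 * \<bar>k\<bar>)
                 / (2 * sqrt (real_of_int d))) \<and>
    \<comment> \<open>(b)\<close>
     (\<forall>k. 2 * y k \<in> \<int> \<and> 2 * y k > 0) \<and>
     (\<forall>k\<ge>0. y k < y (k + 1)) \<and>
    \<comment> \<open>(c), first half: k > 0\<close>
     (\<forall>c::real. (c = 2 * d * u^2 / 5
                  \<or> ((d, t, u) \<noteq> (5, 1, 1) \<and> c = 5 * d * u^2 / 8)
                  \<or> ((real_of_int t ^ 2 - real_of_int d * real_of_int u ^ 2) / 4 = 1 \<and> c = d * u^2)) \<longrightarrow>
        (\<forall>k>0. y k \<ge> \<bar>real_of_int (a^2 - b^4 * d)\<bar> * u^2 / (4 * b^2) * c ^ nat (k - 1))) \<and>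
    \<comment> \<open>parts involving K, the largest negative integer with y K > b^2\<close>
     (\<forall>K. K < 0 \<and> y K > b^2 \<and> (\<forall>k<0. y k > b^2 \<longrightarrow> k \<le> K) \<longrightarrow>
        (\<forall>k\<le>K + 1. y k < y (k - 1)) \<and>
        (\<forall>c::real. (c = 2 * d * u^2 / 5
                  \<or> ((d, t, u) \<noteq> (5, 1, 1) \<and> c = 5 * d * u^2 / 8)
                  \<or> ((real_of_int t ^ 2 - real_of_int d * real_of_int u ^ 2) / 4 = 1 \<and> c = d * u^2)) \<longrightarrow>
          (\<forall>k<0. y k \<ge> \<bar>real_of_int (a^2 - b^4 * d)\<bar> * u^2 / (4 * b^2) * c ^ nat (max 0 (K - k)))))"
proof -
  interpret negative_norm_orbit a b d t u x y
    using assms by unfold_locales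
  have K_part: "(\<forall>k\<le>K + 1. y k < y (k - 1)) \<and>
      (\<forall>c. admissible_ratio c \<longrightarrow> (\<forall>k<0. base_bound * c ^ nat (max 0 (K - k)) \<le> y k))"
    if "K < 0 \<and> real_of_int (b^2) < y K \<and> (\<forall>k<0. real_of_int (b^2) < y k \<longrightarrow> k \<le> K)" for K
  proof -
    from that have K: "K < 0" "real_of_int (b^2) < y K"
      "\<And>k. k < 0 \<Longrightarrow> real_of_int (b^2) < y k \<Longrightarrow> k \<le> K"
      by auto
    show ?thesis
      using y_less_pred_upto_K[OF K] lower_bound_neg[OF K] by blast
  qed
  have "0 < 2 * y k" for k
    using cosh.y_pos[of k] by simp
  then show ?thesis
    unfolding admissible_ratio_def[symmetric]
    using alpha_term_less_y conj_alpha_term_less_y twice_y_Ints cosh.y_less_succ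
      lower_bound_pos K_part
    by blast
qed

end
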